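(* With $f(n)$ the number of partitions of $n$ having a fixed hook (and $f(0)=0$), $$\sum_{n\ge0} f(n)q^n=\sum_{T=0}^\infty \frac{q^{(T+1)^2}}{(q;q)_T\,(q^{T+2};q)_\infty}=\sum_{T=0}^\infty \frac{q^{(T+1)^2}(1-q^{T+1})}{(q;q)_\infty}$$ as formal power series in $q$.
   Context: A partition $\lambda=(\lambda_1\ge\cdots\ge\lambda_t>0)$ of $n$ has first-column hook lengths $h_{i,1}(\lambda)=\lambda_i+(t-i)$, $1\le i\le t$. $\lambda$ has a fixed hook if $h_{i,1}(\lambda)=i$ for some $i$. Notation: $(a;q)_\infty=\prod_{j\ge0}(1-aq^j)$, $(a;q)_n=\prod_{j=0}^{n-1}(1-aq^j)$. *)

theory Defs
  imports "HOL-Computational_Algebra.Formal_Power_Series"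
begin

definition is_partition :: "nat \<Rightarrow> nat list \<Rightarrow> bool" where
  "is_partition n lam \<longleftrightarrow> sorted_wrt (\<ge>) lam \<and> (\<forall>x\<in>set lam. 0 < x) \<and> sum_list lam = n"

text \<open>First-column hook length h_{i,1} = lambda_i + (t - i) for 1 <= i <= t.\<close>
definition hook1 :: "nat list \<Rightarrow> nat \<Rightarrow> nat" where
  "hook1 lam i = lam ! (i - 1) + (length lam - i)"

definition has_fixed_hook :: "nat list \<Rightarrow> bool" where
  "has_fixed_hook lam \<longleftrightarrow> (\<exists>i\<in>{1..length lam}. hook1 lam i = i)"

definition f_fixed :: "nat \<Rightarrow> nat" where
  "f_fixed n = card {lam. is_partition n lam \<and> has_fixed_hook lam}"

definition qpoch :: "rat fps \<Rightarrow> nat \<Rightarrow> rat fps" where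
  "qpoch a n = (\<Prod>j<n. 1 - a * fps_X ^ j)"

definition qpoch_inf :: "rat fps \<Rightarrow> rat fps" where
  "qpoch_inf a = lim (\<lambda>n. qpoch a n)"

end

theory Submission
  imports Defs
begin

(*
  Let lambda have a fixed hook in row i, and put m = lambda_i and k = t - i, so that i = m + k.
  The first-column hook lengths strictly decrease down the column, so the fixed hook is unique,
  and lambda is determined by m, k, the i - 1 rows above row i lowered by m (a partition into at
  most m + k - 1 parts) and the k rows below it (k parts between 1 and m). Hence the partitions
  with a fixed hook and lambda_i = T + 1 have generating function
    sum_k q^((T+1)(T+1+k)) q^k [T+k choose k]_q / (q;q)_(T+k)
      = q^((T+1)^2) / (q;q)_T * sum_k q^((T+2)k) / (q;q)_k,
  and Euler's identity sum_k a^k / (q;q)_k = 1 / (a;q)_oo at a = q^(T+2) gives the first sum.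
  The second sum has the same terms, because (q;q)_oo = (q;q)_(T+1) (q^(T+2);q)_oo.
  Identities involving infinite products are proved by comparing coefficients up to each degree.
*)

unbundle fps_syntax

section \<open>Agreement of power series up to a given degree\<close>

definition eq_upto :: "nat \<Rightarrow> 'a::zero fps \<Rightarrow> 'a fps \<Rightarrow> bool" where
  "eq_upto n f g \<longleftrightarrow> (\<forall>i\<le>n. f $ i = g $ i)"

lemma eq_upto_refl [simp]: "eq_upto n f f"
  by (simp add: eq_upto_def)

lemma eq_upto_sym: "eq_upto n f g \<Longrightarrow> eq_upto n g f"
  by (simp add: eq_upto_def)

lemma eq_upto_trans [trans]: "eq_upto n f g \<Longrightarrow> eq_upto n g h \<Longrightarrow> eq_upto n f h"
  by (simp add: eq_upto_def)

lemma eq_upto_add: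
  "eq_upto n f g \<Longrightarrow> eq_upto n f' g' \<Longrightarrow> eq_upto n (f + f') (g + g' :: 'a::monoid_add fps)"
  by (simp add: eq_upto_def)

lemma eq_upto_diff:
  "eq_upto n f g \<Longrightarrow> eq_upto n f' g' \<Longrightarrow> eq_upto n (f - f') (g - g' :: 'a::group_add fps)"
  by (simp add: eq_upto_def)

lemma eq_upto_mult:
  fixes f g f' g' :: "'a::comm_semiring_1 fps"
  assumes "eq_upto n f g" "eq_upto n f' g'"
  shows "eq_upto n (f * f') (g * g')"
  using assms unfolding eq_upto_def fps_mult_nth by (auto intro!: sum.cong)

lemma fps_eq_if_eq_upto: "(\<And>n. eq_upto n f g) \<Longrightarrow> f = g"
  unfolding eq_upto_def fps_eq_iff by blast

lemma eq_upto_X_power_0: "n < r \<Longrightarrow> eq_upto n (fps_X ^ r :: 'a::comm_semiring_1 fps) 0"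
  by (simp add: eq_upto_def)

lemma eq_upto_mult_0:
  fixes f g :: "'a::comm_semiring_1 fps"
  shows "eq_upto n f 0 \<Longrightarrow> eq_upto n (f * g) 0"
  using eq_upto_mult[of n f 0 g g] by simp

lemma eq_upto_mult_one_minus:
  fixes f g :: "'a::comm_ring_1 fps"
  shows "eq_upto n g 0 \<Longrightarrow> eq_upto n (f * (1 - g)) f"
  using eq_upto_mult[of n f f "1 - g" 1] eq_upto_diff[of n 1 1 g 0] by simp

section \<open>q-Pochhammer symbols\<close>

lemma qpoch_0 [simp]: "qpoch a 0 = 1"
  by (simp add: qpoch_def)

lemma qpoch_Suc: "qpoch a (Suc n) = qpoch a n * (1 - a * fps_X ^ n)"
  by (simp add: qpoch_def)

lemma qpoch_X_Suc: "qpoch fps_X (Suc n) = qpoch fps_X n * (1 - fps_X ^ Suc n)"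
  by (simp add: qpoch_Suc)

lemma qpoch_add: "qpoch a (m + n) = qpoch a m * qpoch (a * fps_X ^ m) n"
  by (induction n) (simp_all add: qpoch_Suc power_add mult_ac)

lemma qpoch_nth_0: "a $ 0 = 0 \<Longrightarrow> qpoch a n $ 0 = 1"
  by (induction n) (simp_all add: qpoch_Suc)

(* Factors 1 - a q^j with j > n do not change the coefficients up to degree n. *)
lemma eq_upto_qpoch:
  assumes "n < N"
  shows "eq_upto n (qpoch a N) (qpoch a (Suc n))"
  using assms
proof (induction N)
  case (Suc N)
  show ?case
  proof (cases "N = n")
    case False
    with Suc.prems have "n < N" by simp
    have "eq_upto n (a * fps_X ^ N) 0"
      using eq_upto_mult_0[OF eq_upto_X_power_0[OF \<open>n < N\<close>], of a] by (simp add: mult.commute)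
    then have "eq_upto n (qpoch a (Suc N)) (qpoch a N)"
      unfolding qpoch_Suc by (rule eq_upto_mult_one_minus)
    then show ?thesis using Suc.IH[OF \<open>n < N\<close>] by (rule eq_upto_trans)
  qed simp
qed simp

lemma qpoch_inf_nth: "qpoch_inf a $ n = qpoch a (Suc n) $ n"
proof -
  define P where "P = Abs_fps (\<lambda>n. qpoch a (Suc n) $ n)"
  have "(\<lambda>N. qpoch a N) \<longlonglongrightarrow> P"
  proof (rule tendsto_fpsI)
    fix n
    show "eventually (\<lambda>N. qpoch a N $ n = P $ n) sequentially"
      unfolding eventually_sequentially
    proof (intro exI allI impI)
      fix N assume "Suc n \<le> N"
      then have "eq_upto n (qpoch a N) (qpoch a (Suc n))" by (intro eq_upto_qpoch) simp
      then show "qpoch a N $ n = P $ n" by (simp add: P_def eq_upto_def)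
    qed
  qed
  then have "qpoch_inf a = P"
    unfolding qpoch_inf_def by (rule limI)
  then show ?thesis by (simp add: P_def)
qed

lemma eq_upto_qpoch_inf:
  assumes "n < N"
  shows "eq_upto n (qpoch_inf a) (qpoch a N)"
  unfolding eq_upto_def
proof (intro allI impI)
  fix i assume "i \<le> n"
  with assms have "eq_upto i (qpoch a N) (qpoch a (Suc i))" by (intro eq_upto_qpoch) simp
  then show "qpoch_inf a $ i = qpoch a N $ i" by (simp add: eq_upto_def qpoch_inf_nth)
qed

lemma qpoch_inf_nth_0: "a $ 0 = 0 \<Longrightarrow> qpoch_inf a $ 0 = 1"
  by (simp add: qpoch_inf_nth qpoch_nth_0)

lemma qpoch_inf_split: "qpoch_inf a = qpoch a m * qpoch_inf (a * fps_X ^ m)"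
proof (rule fps_eq_if_eq_upto)
  fix n
  have "eq_upto n (qpoch_inf a) (qpoch a (m + Suc n))"
    by (rule eq_upto_qpoch_inf) simp
  also have "qpoch a (m + Suc n) = qpoch a m * qpoch (a * fps_X ^ m) (Suc n)"
    by (rule qpoch_add)
  also have "eq_upto n \<dots> (qpoch a m * qpoch_inf (a * fps_X ^ m))"
    by (intro eq_upto_mult eq_upto_refl eq_upto_sym[OF eq_upto_qpoch_inf]) simp
  finally show "eq_upto n (qpoch_inf a) (qpoch a m * qpoch_inf (a * fps_X ^ m))" .
qed

section \<open>Euler's identity\<close>

definition euler_sum :: "rat fps \<Rightarrow> nat \<Rightarrow> rat fps" where
  "euler_sum a K = (\<Sum>k<K. a ^ k * inverse (qpoch fps_X k))"

lemma euler_sum_Suc: "euler_sum a (Suc K) = euler_sum a K + a ^ K * inverse (qpoch fps_X K)"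
  by (simp add: euler_sum_def)

lemma one_minus_X_power_mult_inverse_qpoch:
  "(1 - fps_X ^ Suc K) * inverse (qpoch fps_X (Suc K)) = inverse (qpoch fps_X K)"
proof -
  define Y :: "rat fps" where "Y = fps_X ^ Suc K"
  have "(1 - Y) * inverse (1 - Y) = 1"
    by (rule inverse_mult_eq_1') (simp add: Y_def)
  moreover have "qpoch fps_X (Suc K) = qpoch fps_X K * (1 - Y)"
    by (simp add: qpoch_Suc Y_def)
  ultimately show ?thesis
    unfolding Y_def[symmetric] by (simp add: fps_inverse_mult mult.left_commute)
qed

lemma euler_sum_diff: "euler_sum a (Suc K) - euler_sum (a * fps_X) (Suc K) = a * euler_sum a K"
proof (induction K)
  case (Suc K)
  have "a ^ Suc K * inverse (qpoch fps_X (Suc K)) - (a * fps_X) ^ Suc K * inverse (qpoch fps_X (Suc K))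
      = a * a ^ K * ((1 - fps_X ^ Suc K) * inverse (qpoch fps_X (Suc K)))"
    by (simp only: power_mult_distrib) (simp add: algebra_simps)
  also have "\<dots> = a * (a ^ K * inverse (qpoch fps_X K))"
    by (simp only: one_minus_X_power_mult_inverse_qpoch mult.assoc)
  finally have last_term: "a ^ Suc K * inverse (qpoch fps_X (Suc K))
      - (a * fps_X) ^ Suc K * inverse (qpoch fps_X (Suc K)) = a * (a ^ K * inverse (qpoch fps_X K))" .
  have "euler_sum a (Suc (Suc K)) - euler_sum (a * fps_X) (Suc (Suc K))
      = (euler_sum a (Suc K) - euler_sum (a * fps_X) (Suc K))
        + (a ^ Suc K * inverse (qpoch fps_X (Suc K)) - (a * fps_X) ^ Suc K * inverse (qpoch fps_X (Suc K)))"
    by (simp only: euler_sum_Suc[of _ "Suc K"]) (simp add: algebra_simps)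
  also have "\<dots> = a * euler_sum a (Suc K)"
    unfolding Suc.IH last_term by (simp add: euler_sum_Suc[of a K] distrib_left)
  finally show ?case .
qed (simp add: euler_sum_def)

lemma eq_upto_euler_sum_one_minus:
  assumes "a $ 0 = 0" "n \<le> K"
  shows "eq_upto n (euler_sum a (Suc K) * (1 - a)) (euler_sum (a * fps_X) (Suc K))"
proof -
  have "euler_sum (a * fps_X) (Suc K) = euler_sum a (Suc K) - a * euler_sum a K"
    by (simp add: euler_sum_diff[symmetric])
  then have "euler_sum a (Suc K) * (1 - a)
      = euler_sum (a * fps_X) (Suc K) - a ^ Suc K * inverse (qpoch fps_X K)"
    by (simp add: euler_sum_Suc[of a K] algebra_simps)
  moreover have "eq_upto n (a ^ Suc K) 0"
    using startsby_zero_power_prefix[OF assms(1), of "Suc K"] assms(2)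
    by (auto simp: eq_upto_def simp del: power_Suc)
  then have "eq_upto n (euler_sum (a * fps_X) (Suc K) - a ^ Suc K * inverse (qpoch fps_X K))
      (euler_sum (a * fps_X) (Suc K) - 0)"
    by (intro eq_upto_diff eq_upto_refl eq_upto_mult_0)
  ultimately show ?thesis by simp
qed

lemma eq_upto_euler_sum_qpoch:
  assumes "a $ 0 = 0" "n \<le> K"
  shows "eq_upto n (euler_sum a (Suc K) * qpoch a N) (euler_sum (a * fps_X ^ N) (Suc K))"
proof (induction N)
  case (Suc N)
  have "euler_sum a (Suc K) * qpoch a (Suc N)
      = euler_sum a (Suc K) * qpoch a N * (1 - a * fps_X ^ N)"
    by (simp add: qpoch_Suc mult.assoc)
  also have "eq_upto n \<dots> (euler_sum (a * fps_X ^ N) (Suc K) * (1 - a * fps_X ^ N))"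
    by (intro eq_upto_mult Suc.IH eq_upto_refl)
  also have "eq_upto n \<dots> (euler_sum (a * fps_X ^ N * fps_X) (Suc K))"
    by (intro eq_upto_euler_sum_one_minus) (simp_all add: assms)
  also have "a * fps_X ^ N * fps_X = a * fps_X ^ Suc N"
    by (simp only: mult.assoc power_Suc2)
  finally show ?case .
qed simp

lemma eq_upto_euler_sum_1:
  assumes "eq_upto n b 0"
  shows "eq_upto n (euler_sum b (Suc K)) 1"
proof (induction K)
  case (Suc K)
  have "eq_upto n (b * (b ^ K * inverse (qpoch fps_X (Suc K)))) 0"
    by (rule eq_upto_mult_0[OF assms])
  then have "eq_upto n (euler_sum b (Suc K) + b ^ Suc K * inverse (qpoch fps_X (Suc K))) (1 + 0)"
    by (intro eq_upto_add Suc.IH) (simp add: mult.assoc)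
  then show ?case by (simp add: euler_sum_Suc[of b "Suc K"])
qed (simp add: euler_sum_def)

(* With E(a) the partial sums, E(a) (1 - a) agrees with E(a q) up to high degree; iterating,
   E(a) (a;q)_N agrees with E(a q^N), which is 1 up to degree N. *)
theorem euler_identity:
  assumes "a $ 0 = 0"
  shows "eq_upto n (inverse (qpoch_inf a)) (euler_sum a (Suc n))"
proof -
  have "eq_upto n (euler_sum a (Suc n) * qpoch_inf a) (euler_sum a (Suc n) * qpoch a (Suc n))"
    by (intro eq_upto_mult eq_upto_refl eq_upto_qpoch_inf) simp
  also have "eq_upto n \<dots> (euler_sum (a * fps_X ^ Suc n) (Suc n))"
    by (rule eq_upto_euler_sum_qpoch[OF assms]) simp
  also have "eq_upto n \<dots> 1"
    by (intro eq_upto_euler_sum_1 eq_upto_mult_0[of n "fps_X ^ Suc n", simplified mult.commute]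
        eq_upto_X_power_0) simp
  finally have "eq_upto n (inverse (qpoch_inf a) * (euler_sum a (Suc n) * qpoch_inf a))
      (inverse (qpoch_inf a) * 1)"
    by (intro eq_upto_mult eq_upto_refl)
  moreover have "inverse (qpoch_inf a) * qpoch_inf a = 1"
    by (rule inverse_mult_eq_1) (simp add: qpoch_inf_nth_0 assms)
  ultimately show ?thesis
    by (simp add: eq_upto_sym mult.left_commute[of "inverse (qpoch_inf a)"])
qed

section \<open>Counting generating functions\<close>

definition counting_fps :: "(nat \<Rightarrow> 'a set) \<Rightarrow> rat fps" where
  "counting_fps A = Abs_fps (\<lambda>n. of_nat (card (A n)))"

lemma counting_fps_nth [simp]: "counting_fps A $ n = of_nat (card (A n))"
  by (simp add: counting_fps_def)

lemma counting_fps_Un: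
  assumes "\<And>n. finite (A n)" "\<And>n. finite (B n)" "\<And>n. A n \<inter> B n = {}"
  shows "counting_fps (\<lambda>n. A n \<union> B n) = counting_fps A + counting_fps B"
  by (rule fps_ext) (simp add: assms card_Un_disjoint)

lemma counting_fps_image:
  "inj f \<Longrightarrow> counting_fps (\<lambda>n. f ` A n) = counting_fps A"
  by (rule fps_ext) (simp add: card_image inj_on_subset)

lemma counting_fps_shift:
  "counting_fps (\<lambda>n. if d \<le> n then A (n - d) else {}) = fps_X ^ d * counting_fps A"
  by (rule fps_ext) (simp add: fps_X_power_mult_nth)

lemma counting_fps_mult:
  assumes "\<And>n. finite (A n)" "\<And>n. finite (B n)" "\<And>i j. i \<noteq> j \<Longrightarrow> A i \<inter> A j = {}"
  shows "counting_fps A * counting_fps B = counting_fps (\<lambda>n. \<Union>i\<le>n. A i \<times> B (n - i))"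
proof (rule fps_ext)
  fix n
  have "\<And>i j. i \<noteq> j \<Longrightarrow> (A i \<times> B (n - i)) \<inter> (A j \<times> B (n - j)) = {}"
    using assms(3) by blast
  then have "card (\<Union>i\<le>n. A i \<times> B (n - i)) = (\<Sum>i\<le>n. card (A i \<times> B (n - i)))"
    using assms(1,2) by (intro card_UN_disjoint) auto
  then show "(counting_fps A * counting_fps B) $ n = counting_fps (\<lambda>n. \<Union>i\<le>n. A i \<times> B (n - i)) $ n"
    by (simp add: fps_mult_nth atLeast0AtMost card_cartesian_product)
qed

(* sorted_lists N n: the partitions of n into at most N parts, padded with zeros. *)
definition sorted_lists :: "nat \<Rightarrow> nat \<Rightarrow> nat list set" where
  "sorted_lists N n = {xs. length xs = N \<and> sorted xs \<and> sum_list xs = n}"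

definition sorted_lists_in :: "nat \<Rightarrow> nat \<Rightarrow> nat \<Rightarrow> nat list set" where
  "sorted_lists_in k m n = {xs \<in> sorted_lists k n. set xs \<subseteq> {1..m}}"

lemma finite_sorted_lists: "finite (sorted_lists N n)"
proof (rule finite_subset)
  show "sorted_lists N n \<subseteq> {xs. set xs \<subseteq> {0..n} \<and> length xs = N}"
    unfolding sorted_lists_def using member_le_sum_list by fastforce
qed (rule finite_lists_length_eq, simp)

lemma finite_sorted_lists_in: "finite (sorted_lists_in k m n)"
  using finite_sorted_lists by (simp add: sorted_lists_in_def)

lemma mem_image_map_Suc:
  "xs \<in> map Suc ` A \<longleftrightarrow> 0 \<notin> set xs \<and> map (\<lambda>x. x - 1) xs \<in> A"
proof
  assume xs: "0 \<notin> set xs \<and> map (\<lambda>x. x - 1) xs \<in> A"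
  have "map Suc (map (\<lambda>x. x - 1) xs) = xs"
    using xs[THEN conjunct1] by (induction xs) auto
  with xs show "xs \<in> map Suc ` A" by (metis image_eqI)
qed (auto simp: comp_def)

lemma sum_list_map_pred:
  "0 \<notin> set xs \<Longrightarrow> sum_list (map (\<lambda>x. x - 1) xs) + length xs = sum_list xs"
  by (induction xs) auto

lemma sorted_map_pred: "sorted xs \<Longrightarrow> sorted (map (\<lambda>x. x - 1 :: nat) xs)"
  unfolding sorted_map by (erule sorted_wrt_mono_rel[rotated]) simp

lemma map_pred_mem_sorted_lists:
  assumes "xs \<in> sorted_lists N n" "0 \<notin> set xs"
  shows "N \<le> n" "map (\<lambda>x. x - 1) xs \<in> sorted_lists N (n - N)"
proof -
  have "sum_list (map (\<lambda>x. x - 1) xs) + N = n"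
    using assms sum_list_map_pred[of xs] by (simp add: sorted_lists_def)
  then show "N \<le> n" "map (\<lambda>x. x - 1) xs \<in> sorted_lists N (n - N)"
    using assms(1) sorted_map_pred[of xs] by (auto simp: sorted_lists_def)
qed

lemma map_Suc_mem_sorted_lists:
  "ys \<in> sorted_lists N n \<Longrightarrow> map Suc ys \<in> sorted_lists N (n + N)"
  using sum_list_Suc[of "\<lambda>x. x" ys] by (simp add: sorted_lists_def sorted_map)

lemma sorted_lists_Suc:
  "sorted_lists (Suc N) n = Cons 0 ` sorted_lists N n
     \<union> map Suc ` (if Suc N \<le> n then sorted_lists (Suc N) (n - Suc N) else {})"
proof (intro equalityI subsetI)
  fix xs assume xs: "xs \<in> sorted_lists (Suc N) n"
  then obtain x ys where xys: "xs = x # ys" by (cases xs) (auto simp: sorted_lists_def)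
  show "xs \<in> Cons 0 ` sorted_lists N n
     \<union> map Suc ` (if Suc N \<le> n then sorted_lists (Suc N) (n - Suc N) else {})"
  proof (cases "x = 0")
    case True
    with xs xys show ?thesis by (auto simp: sorted_lists_def)
  next
    case False
    with xs xys have "0 \<notin> set xs" by (auto simp: sorted_lists_def)
    with map_pred_mem_sorted_lists[OF xs] show ?thesis by (simp add: mem_image_map_Suc)
  qed
next
  fix xs assume "xs \<in> Cons 0 ` sorted_lists N n
     \<union> map Suc ` (if Suc N \<le> n then sorted_lists (Suc N) (n - Suc N) else {})"
  then show "xs \<in> sorted_lists (Suc N) n"
    using map_Suc_mem_sorted_lists[of _ "Suc N" "n - Suc N"]
    by (auto simp: sorted_lists_def split: if_splits)
qed

lemma sorted_lists_in_0: "sorted_lists_in 0 m n = (if n = 0 then {[]} else {})"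
  by (auto simp: sorted_lists_in_def sorted_lists_def)

lemma sorted_lists_in_Suc_0: "sorted_lists_in (Suc k) 0 n = {}"
  by (auto simp: sorted_lists_in_def sorted_lists_def length_Suc_conv)

lemma sorted_lists_in_Suc_Suc:
  "sorted_lists_in (Suc k) (Suc m) n =
     Cons 1 ` (if 1 \<le> n then sorted_lists_in k (Suc m) (n - 1) else {})
     \<union> map Suc ` (if Suc k \<le> n then sorted_lists_in (Suc k) m (n - Suc k) else {})"
proof (intro equalityI subsetI)
  fix xs assume xs: "xs \<in> sorted_lists_in (Suc k) (Suc m) n"
  then obtain x ys where xys: "xs = x # ys"
    by (cases xs) (auto simp: sorted_lists_in_def sorted_lists_def)
  show "xs \<in> Cons 1 ` (if 1 \<le> n then sorted_lists_in k (Suc m) (n - 1) else {})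
     \<union> map Suc ` (if Suc k \<le> n then sorted_lists_in (Suc k) m (n - Suc k) else {})"
  proof (cases "x = 1")
    case True
    with xs xys show ?thesis by (auto simp: sorted_lists_in_def sorted_lists_def)
  next
    case False
    with xs xys have ge2: "\<forall>y\<in>set xs. 2 \<le> y"
      by (fastforce simp: sorted_lists_in_def sorted_lists_def)
    then have "0 \<notin> set xs" by auto
    moreover have "set (map (\<lambda>x. x - 1) xs) \<subseteq> {1..m}"
      using xs ge2 by (fastforce simp: sorted_lists_in_def)
    ultimately show ?thesis
      using map_pred_mem_sorted_lists[of xs "Suc k" n] xs
      by (simp add: mem_image_map_Suc sorted_lists_in_def)
  qed
next
  fix xs assume "xs \<in> Cons 1 ` (if 1 \<le> n then sorted_lists_in k (Suc m) (n - 1) else {})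
     \<union> map Suc ` (if Suc k \<le> n then sorted_lists_in (Suc k) m (n - Suc k) else {})"
  then show "xs \<in> sorted_lists_in (Suc k) (Suc m) n"
    using map_Suc_mem_sorted_lists[of _ "Suc k" "n - Suc k"]
    by (fastforce simp: sorted_lists_in_def sorted_lists_def split: if_splits)
qed

lemma counting_fps_sorted_lists_Suc:
  "counting_fps (sorted_lists (Suc N))
     = counting_fps (sorted_lists N) + fps_X ^ Suc N * counting_fps (sorted_lists (Suc N))"
proof -
  let ?A = "\<lambda>n. Cons 0 ` sorted_lists N n"
  let ?B = "\<lambda>n. if Suc N \<le> n then sorted_lists (Suc N) (n - Suc N) else {}"
  have "counting_fps (sorted_lists (Suc N)) = counting_fps (\<lambda>n. ?A n \<union> map Suc ` ?B n)"
    by (rule arg_cong[where f = counting_fps], rule ext) (rule sorted_lists_Suc)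
  also have "\<dots> = counting_fps ?A + counting_fps (\<lambda>n. map Suc ` ?B n)"
    by (rule counting_fps_Un) (auto simp: finite_sorted_lists)
  finally have "counting_fps (sorted_lists (Suc N))
      = counting_fps ?A + counting_fps (\<lambda>n. map Suc ` ?B n)" .
  moreover have "counting_fps ?A = counting_fps (sorted_lists N)"
    by (rule counting_fps_image) simp
  moreover have "counting_fps (\<lambda>n. map Suc ` ?B n) = counting_fps ?B"
    by (rule counting_fps_image) simp
  ultimately show ?thesis
    by (simp only: counting_fps_shift)
qed

lemma sorted_lists_0: "sorted_lists 0 n = (if n = 0 then {[]} else {})"
  by (auto simp: sorted_lists_def)

lemma counting_fps_sorted_lists_0: "counting_fps (sorted_lists 0) = 1"
  by (rule fps_ext) (simp add: sorted_lists_0)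

lemma counting_fps_sorted_lists_qpoch: "counting_fps (sorted_lists N) * qpoch fps_X N = 1"
proof (induction N)
  case 0
  show ?case by (simp add: counting_fps_sorted_lists_0)
next
  case (Suc N)
  have step: "counting_fps (sorted_lists (Suc N)) * (1 - fps_X ^ Suc N) = counting_fps (sorted_lists N)"
    using counting_fps_sorted_lists_Suc[of N] by (simp add: algebra_simps)
  have "counting_fps (sorted_lists (Suc N)) * qpoch fps_X (Suc N)
      = counting_fps (sorted_lists (Suc N)) * (1 - fps_X ^ Suc N) * qpoch fps_X N"
    by (simp only: qpoch_X_Suc mult_ac)
  also have "\<dots> = 1"
    by (simp only: step Suc.IH)
  finally show ?case .
qed

lemma counting_fps_sorted_lists_in_Suc_Suc:
  "counting_fps (sorted_lists_in (Suc k) (Suc m))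
     = fps_X * counting_fps (sorted_lists_in k (Suc m))
       + fps_X ^ Suc k * counting_fps (sorted_lists_in (Suc k) m)"
proof -
  let ?A = "\<lambda>n. if 1 \<le> n then sorted_lists_in k (Suc m) (n - 1) else {}"
  let ?B = "\<lambda>n. if Suc k \<le> n then sorted_lists_in (Suc k) m (n - Suc k) else {}"
  have "counting_fps (sorted_lists_in (Suc k) (Suc m))
      = counting_fps (\<lambda>n. Cons 1 ` ?A n \<union> map Suc ` ?B n)"
    by (rule arg_cong[where f = counting_fps], rule ext) (rule sorted_lists_in_Suc_Suc)
  also have "\<dots> = counting_fps (\<lambda>n. Cons 1 ` ?A n) + counting_fps (\<lambda>n. map Suc ` ?B n)"
    by (rule counting_fps_Un) (simp_all add: finite_sorted_lists_in, force simp: sorted_lists_in_def)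
  finally have split: "counting_fps (sorted_lists_in (Suc k) (Suc m))
      = counting_fps (\<lambda>n. Cons 1 ` ?A n) + counting_fps (\<lambda>n. map Suc ` ?B n)" .
  have "counting_fps (\<lambda>n. Cons 1 ` ?A n) = counting_fps ?A"
    by (rule counting_fps_image) simp
  moreover have "counting_fps (\<lambda>n. map Suc ` ?B n) = counting_fps ?B"
    by (rule counting_fps_image) simp
  ultimately show ?thesis
    using split counting_fps_shift[of 1 "sorted_lists_in k (Suc m)"] by (simp add: counting_fps_shift)
qed

lemma counting_fps_sorted_lists_in_0: "counting_fps (sorted_lists_in 0 m) = 1"
  by (rule fps_ext) (simp add: sorted_lists_in_0)

lemma counting_fps_sorted_lists_in_Suc_0: "counting_fps (sorted_lists_in (Suc k) 0) = 0"
  by (rule fps_ext) (simp add: sorted_lists_in_Suc_0)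

(* The q-binomial identity: sorted_lists_in k (m + 1) is counted by q^k [m + k choose k]_q. *)
lemma counting_fps_sorted_lists_in_qpoch:
  "counting_fps (sorted_lists_in k (Suc m)) * qpoch fps_X k * qpoch fps_X m
     = fps_X ^ k * qpoch fps_X (m + k)"
proof (induction k arbitrary: m)
  case 0
  show ?case by (simp add: counting_fps_sorted_lists_in_0)
next
  case (Suc k)
  let ?B = "\<lambda>k m. counting_fps (sorted_lists_in k m)"
  let ?q = "qpoch fps_X"
  have IH_k: "?B k (Suc m) * ?q k * ?q m = fps_X ^ k * ?q (m + k)" for m
    by (rule Suc.IH)
  show ?case
  proof (induction m)
    case 0
    have "?B (Suc k) (Suc 0) * ?q (Suc k) * ?q 0
        = fps_X * (1 - fps_X ^ Suc k) * (?B k (Suc 0) * ?q k * ?q 0)"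
      using counting_fps_sorted_lists_in_Suc_Suc[of k 0]
      by (simp add: counting_fps_sorted_lists_in_Suc_0 qpoch_X_Suc del: power_Suc)
    also have "\<dots> = fps_X ^ Suc k * ?q (Suc k)"
      by (simp only: IH_k) (simp add: qpoch_X_Suc algebra_simps)
    finally show ?case by simp
  next
    case (Suc m)
    define Y :: "rat fps" where "Y = fps_X ^ Suc k"
    define Z :: "rat fps" where "Z = fps_X ^ Suc m"
    define Q where "Q = ?q (Suc (m + k))"
    have "?B (Suc k) (Suc (Suc m)) * ?q (Suc k) * ?q (Suc m)
        = fps_X * (1 - Y) * (?B k (Suc (Suc m)) * ?q k * ?q (Suc m))
          + Y * (1 - Z) * (?B (Suc k) (Suc m) * ?q (Suc k) * ?q m)"
      unfolding counting_fps_sorted_lists_in_Suc_Suc Y_def Z_def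
      by (simp only: qpoch_X_Suc[of k] qpoch_X_Suc[of m]) (simp add: algebra_simps)
    also have "\<dots> = fps_X * (1 - Y) * (fps_X ^ k * Q) + Y * (1 - Z) * (Y * Q)"
      by (simp only: IH_k Suc.IH) (simp add: Q_def Y_def)
    also have "\<dots> = Y * (Q * (1 - Y * Z))"
      by (simp add: Y_def algebra_simps)
    also have "\<dots> = fps_X ^ Suc k * ?q (Suc m + Suc k)"
      by (simp add: Q_def Y_def Z_def qpoch_X_Suc power_add)
    finally show ?case .
  qed
qed

lemma counting_fps_sorted_lists: "counting_fps (sorted_lists N) = inverse (qpoch fps_X N)"
  by (rule fps_inverse_unique[symmetric]) (metis counting_fps_sorted_lists_qpoch mult.commute)

lemma X_power_mult_inverse_qpoch_qpoch:
  "fps_X ^ k * inverse (qpoch fps_X k) * inverse (qpoch fps_X m)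
     = counting_fps (sorted_lists_in k (Suc m)) * counting_fps (sorted_lists (m + k))"
proof -
  have unit: "qpoch fps_X n * inverse (qpoch fps_X n) = 1" for n
    by (rule inverse_mult_eq_1') (simp add: qpoch_nth_0)
  have "fps_X ^ k * inverse (qpoch fps_X k) * inverse (qpoch fps_X m)
      = fps_X ^ k * qpoch fps_X (m + k) * inverse (qpoch fps_X k) * inverse (qpoch fps_X m)
        * inverse (qpoch fps_X (m + k))"
    using unit[of "m + k"] by (simp add: mult_ac)
  also have "\<dots> = counting_fps (sorted_lists_in k (Suc m))
        * (qpoch fps_X k * inverse (qpoch fps_X k)) * (qpoch fps_X m * inverse (qpoch fps_X m))
        * inverse (qpoch fps_X (m + k))"
    by (simp only: counting_fps_sorted_lists_in_qpoch[symmetric] mult_ac)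
  also have "\<dots> = counting_fps (sorted_lists_in k (Suc m)) * counting_fps (sorted_lists (m + k))"
    by (simp add: unit counting_fps_sorted_lists)
  finally show ?thesis .
qed

section \<open>Partitions with a fixed hook\<close>

(* The partition, as a weakly decreasing list, with fixed hook in row m + k of length m:
   U (increasing) lists the rows above it lowered by m, and L (increasing) the rows below it. *)
definition hook_partition :: "nat \<Rightarrow> nat list \<Rightarrow> nat list \<Rightarrow> nat list" where
  "hook_partition m L U = rev (map (\<lambda>x. x + m) U) @ m # rev L"

definition hook_decomps :: "nat \<Rightarrow> nat \<Rightarrow> nat \<Rightarrow> (nat list \<times> nat list) set" where
  "hook_decomps m k n = {(L, U). length L = k \<and> sorted L \<and> set L \<subseteq> {1..m}
      \<and> length U = m + k - 1 \<and> sorted U \<and> sum_list L + sum_list U + m * (m + k) = n}"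

lemma sum_list_map_add: "sum_list (map (\<lambda>x. x + m) xs) = sum_list xs + m * length xs"
  by (induction xs) auto

lemma sum_list_map_diff:
  "(\<forall>x\<in>set xs. m \<le> x) \<Longrightarrow> sum_list (map (\<lambda>x. x - m) xs) + m * length xs = sum_list xs"
  by (induction xs) auto

lemma fixed_hook_unique:
  assumes "sorted_wrt (\<ge>) lam"
    and "i \<in> {1..length lam}" "j \<in> {1..length lam}"
    and "hook1 lam i = i" "hook1 lam j = j"
  shows "i = j"
proof (rule ccontr)
  have mono: "lam ! (b - 1) \<le> lam ! (a - 1)" if "a < b" "a \<in> {1..length lam}" "b \<in> {1..length lam}" for a b
    using sorted_wrt_nth_less[OF assms(1), of "a - 1" "b - 1"] that by auto
  assume "i \<noteq> j"
  then consider "i < j" | "j < i" by linarith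
  then show False
    by cases (use mono assms(2-5) in \<open>force simp: hook1_def\<close>)+
qed

lemma hook_partition_is_partition:
  assumes "1 \<le> m" "(L, U) \<in> hook_decomps m k n"
  shows "is_partition n (hook_partition m L U)"
proof -
  have L: "length L = k" "sorted L" "set L \<subseteq> {1..m}"
    and U: "length U = m + k - 1" "sorted U"
    and sum: "sum_list L + sum_list U + m * (m + k) = n"
    using assms(2) by (auto simp: hook_decomps_def)
  have "sorted_wrt (\<ge>) (rev (map (\<lambda>x. x + m) U))" "sorted_wrt (\<ge>) (m # rev L)"
    using L(2,3) U(2) by (auto simp: sorted_wrt_rev sorted_map)
  moreover have "\<forall>x\<in>set (rev (map (\<lambda>x. x + m) U)). \<forall>y\<in>set (m # rev L). y \<le> x"
    using L(3) by fastforce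
  ultimately have "sorted_wrt (\<ge>) (hook_partition m L U)"
    unfolding hook_partition_def sorted_wrt_append by blast
  moreover have "\<forall>x\<in>set (hook_partition m L U). 0 < x"
    using L(3) assms(1) by (fastforce simp: hook_partition_def)
  moreover have "m * (m + k - 1) + m = m * (m + k)"
    using assms(1) by (cases m) auto
  then have "sum_list (hook_partition m L U) = n"
    using sum U(1) by (simp add: hook_partition_def sum_list_map_add sum_list_rev)
  ultimately show ?thesis by (simp add: is_partition_def)
qed

lemma hook1_hook_partition:
  assumes "1 \<le> m" "(L, U) \<in> hook_decomps m k n"
  shows "length (hook_partition m L U) = m + 2 * k"
    and "hook1 (hook_partition m L U) (m + k) = m + k"
proof -
  have len: "length L = k" "length U = m + k - 1"
    using assms(2) by (auto simp: hook_decomps_def)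
  then show "length (hook_partition m L U) = m + 2 * k"
    using assms(1) by (simp add: hook_partition_def)
  have "hook_partition m L U ! (m + k - 1) = m"
    using len by (simp add: hook_partition_def nth_append)
  then show "hook1 (hook_partition m L U) (m + k) = m + k"
    using len assms(1) by (simp add: hook1_def hook_partition_def)
qed

lemma hook_partition_has_fixed_hook:
  assumes "1 \<le> m" "(L, U) \<in> hook_decomps m k n"
  shows "has_fixed_hook (hook_partition m L U)"
  unfolding has_fixed_hook_def using hook1_hook_partition[OF assms] assms(1)
  by (intro bexI[of _ "m + k"]) auto

lemma hook_partition_inj:
  assumes "1 \<le> m" "1 \<le> m'" "(L, U) \<in> hook_decomps m k n" "(L', U') \<in> hook_decomps m' k' n'"
    and eq: "hook_partition m L U = hook_partition m' L' U'"
  shows "m = m' \<and> k = k' \<and> L = L' \<and> U = U'"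
proof -
  note hook = hook1_hook_partition[OF assms(1,3)] and hook' = hook1_hook_partition[OF assms(2,4)]
  have "sorted_wrt (\<ge>) (hook_partition m L U)"
    using hook_partition_is_partition[OF assms(1,3)] by (simp add: is_partition_def)
  then have "m + k = m' + k'"
    by (rule fixed_hook_unique) (use hook hook' eq assms(1,2) in auto)
  moreover have "m + 2 * k = m' + 2 * k'"
    using hook(1) hook'(1) eq by simp
  ultimately have mk: "m = m'" "k = k'" by linarith+
  have "length (rev (map (\<lambda>x. x + m) U)) = length (rev (map (\<lambda>x. x + m) U'))"
    using assms(3,4) mk by (simp add: hook_decomps_def)
  then have "map (\<lambda>x. x + m) U = map (\<lambda>x. x + m) U'" "L = L'"
    using eq unfolding hook_partition_def mk(1)[symmetric] by auto
  moreover have "inj (\<lambda>x::nat. x + m)" by (simp add: inj_on_def)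
  ultimately show ?thesis using mk by (simp add: inj_map_eq_map)
qed

lemma hook_decomps_of_split:
  assumes "is_partition n (A @ m # B)" "length A = m + k - 1" "length B = k" "1 \<le> m"
  defines "U \<equiv> rev (map (\<lambda>x. x - m) A)"
  shows "(rev B, U) \<in> hook_decomps m k n" and "hook_partition m (rev B) U = A @ m # B"
proof -
  have A: "sorted_wrt (\<ge>) A" "\<forall>x\<in>set A. m \<le> x"
    and B: "sorted_wrt (\<ge>) B" "\<forall>x\<in>set B. x \<le> m \<and> 0 < x"
    and sum: "sum_list A + m + sum_list B = n"
    using assms(1) by (auto simp: is_partition_def sorted_wrt_append)
  have "rev (map (\<lambda>x. x + m) U) = A"
    unfolding U_def using A(2) by (induction A) auto
  then show "hook_partition m (rev B) U = A @ m # B"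
    by (simp add: hook_partition_def)
  have "sorted_wrt (\<lambda>x y. y - m \<le> x - m) A"
    using A(1) by (rule sorted_wrt_mono_rel[rotated]) (simp add: diff_le_mono)
  then have "sorted U"
    by (simp add: U_def sorted_wrt_rev sorted_wrt_map)
  moreover have "sorted (rev B)" "set (rev B) \<subseteq> {1..m}"
    using B by (auto simp: sorted_wrt_rev Suc_le_eq)
  moreover have "sum_list (rev B) + sum_list U + m * (m + k) = n"
  proof -
    have "sum_list A = sum_list U + m * (m + k - 1)"
      using sum_list_map_diff[OF A(2)] assms(2) by (simp add: U_def sum_list_rev)
    moreover have "m * (m + k - 1) + m = m * (m + k)"
      using assms(4) by (cases m) auto
    ultimately show ?thesis using sum by simp
  qed
  ultimately show "(rev B, U) \<in> hook_decomps m k n"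
    using assms(2,3) by (simp add: hook_decomps_def U_def)
qed

lemma hook_partition_surj:
  assumes "is_partition n lam" "has_fixed_hook lam"
  obtains m k L U where "1 \<le> m" "(L, U) \<in> hook_decomps m k n" "lam = hook_partition m L U"
proof -
  obtain i where i: "1 \<le> i" "i \<le> length lam" "hook1 lam i = i"
    using assms(2) unfolding has_fixed_hook_def by auto
  define m where "m = lam ! (i - 1)"
  define k where "k = length lam - i"
  have "i - 1 < length lam" using i by simp
  then have split: "lam = take (i - 1) lam @ m # drop i lam"
    unfolding m_def using id_take_nth_drop i(1) by fastforce
  have "1 \<le> m"
    using assms(1) i unfolding is_partition_def m_def by (simp add: Suc_le_eq)
  moreover have "i = m + k"
    using i(3) unfolding hook1_def m_def k_def by simp
  then have "length (take (i - 1) lam) = m + k - 1" "length (drop i lam) = k"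
    using i(2) by (simp_all add: k_def)
  ultimately show ?thesis
    using hook_decomps_of_split[of n "take (i - 1) lam" m "drop i lam" k] assms(1) split that
    by (metis (no_types))
qed

lemma hook_decomps_bound:
  assumes "1 \<le> m" "(L, U) \<in> hook_decomps m k n"
  shows "m + k \<le> n"
proof -
  have "m + k \<le> m * (m + k)" using assms(1) by simp
  also have "\<dots> \<le> n" using assms(2) by (auto simp: hook_decomps_def)
  finally show ?thesis .
qed

lemma finite_hook_decomps: "finite (hook_decomps m k n)"
proof (rule finite_subset)
  show "hook_decomps m k n \<subseteq> (\<Union>i\<le>n. sorted_lists_in k m i) \<times> (\<Union>j\<le>n. sorted_lists (m + k - 1) j)"
    by (force simp: hook_decomps_def sorted_lists_in_def sorted_lists_def)
qed (simp add: finite_sorted_lists finite_sorted_lists_in)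

lemma f_fixed_eq_sum_card_hook_decomps:
  "f_fixed n = (\<Sum>T<Suc n. \<Sum>k<Suc n. card (hook_decomps (Suc T) k n))"
proof -
  let ?I = "{..<Suc n} \<times> {..<Suc n}"
  let ?D = "SIGMA (T, k):?I. hook_decomps (Suc T) k n"
  let ?g = "\<lambda>((T, k), (L, U)). hook_partition (Suc T) L U"
  have "bij_betw ?g ?D {lam. is_partition n lam \<and> has_fixed_hook lam}"
  proof (rule bij_betw_imageI)
    show "inj_on ?g ?D"
    proof (rule inj_onI)
      fix x y assume "x \<in> ?D" "y \<in> ?D" "?g x = ?g y"
      moreover obtain T k L U T' k' L' U' where "x = ((T, k), (L, U))" "y = ((T', k'), (L', U'))"
        by (metis prod.exhaust)
      ultimately show "x = y"
        using hook_partition_inj[of "Suc T" "Suc T'" L U k n L' U' k' n] by auto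
    qed
    show "?g ` ?D = {lam. is_partition n lam \<and> has_fixed_hook lam}"
    proof (intro equalityI subsetI)
      fix lam assume "lam \<in> ?g ` ?D"
      then show "lam \<in> {lam. is_partition n lam \<and> has_fixed_hook lam}"
        by (auto simp: hook_partition_is_partition hook_partition_has_fixed_hook)
    next
      fix lam assume "lam \<in> {lam. is_partition n lam \<and> has_fixed_hook lam}"
      then have "is_partition n lam" "has_fixed_hook lam" by simp_all
      then obtain m k L U
        where m: "1 \<le> m" and d: "(L, U) \<in> hook_decomps m k n" and lam: "lam = hook_partition m L U"
        by (rule hook_partition_surj)
      have "m + k \<le> n" using m d by (rule hook_decomps_bound)
      moreover have "Suc (m - 1) = m" using m by simp
      ultimately have "((m - 1, k), (L, U)) \<in> ?D" "lam = ?g ((m - 1, k), (L, U))"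
        using d lam by simp_all
      then show "lam \<in> ?g ` ?D" by (rule rev_image_eqI)
    qed
  qed
  then have "f_fixed n = card ?D"
    by (simp add: f_fixed_def bij_betw_same_card)
  also have "\<dots> = (\<Sum>(T, k)\<in>?I. card (hook_decomps (Suc T) k n))"
    by (subst card_SigmaI) (auto simp: finite_hook_decomps intro!: sum.cong)
  also have "\<dots> = (\<Sum>T<Suc n. \<Sum>k<Suc n. card (hook_decomps (Suc T) k n))"
    by (rule sum.cartesian_product[symmetric])
  finally show ?thesis .
qed

section \<open>The generating function\<close>

lemma hook_decomps_eq_shifted_product:
  "hook_decomps m k n = (if m * (m + k) \<le> n then
     (\<Union>i\<le>n - m * (m + k). sorted_lists_in k m i \<times> sorted_lists (m + k - 1) (n - m * (m + k) - i))
     else {})"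
  by (auto simp: hook_decomps_def sorted_lists_in_def sorted_lists_def)

lemma counting_fps_hook_decomps:
  "counting_fps (hook_decomps m k) = fps_X ^ (m * (m + k))
     * (counting_fps (sorted_lists_in k m) * counting_fps (sorted_lists (m + k - 1)))"
proof -
  have "counting_fps (sorted_lists_in k m) * counting_fps (sorted_lists (m + k - 1))
      = counting_fps (\<lambda>n. \<Union>i\<le>n. sorted_lists_in k m i \<times> sorted_lists (m + k - 1) (n - i))"
    by (rule counting_fps_mult)
       (simp_all add: finite_sorted_lists finite_sorted_lists_in,
        auto simp: sorted_lists_in_def sorted_lists_def)
  moreover have "hook_decomps m k = (\<lambda>n. if m * (m + k) \<le> n then
      (\<Union>i\<le>n - m * (m + k). sorted_lists_in k m i \<times> sorted_lists (m + k - 1) (n - m * (m + k) - i))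
      else {})"
    by (rule ext) (rule hook_decomps_eq_shifted_product)
  moreover note counting_fps_shift[of "m * (m + k)"
      "\<lambda>n. \<Union>i\<le>n. sorted_lists_in k m i \<times> sorted_lists (m + k - 1) (n - i)"]
  ultimately show ?thesis by (simp only:)
qed

lemma eq_upto_fixed_hook_term:
  "eq_upto n (fps_X ^ ((T + 1)^2) / (qpoch fps_X T * qpoch_inf (fps_X ^ (T + 2))))
     (\<Sum>k<Suc n. counting_fps (hook_decomps (Suc T) k))"
proof -
  have "(qpoch fps_X T * qpoch_inf (fps_X ^ (T + 2))) $ 0 \<noteq> 0"
    by (simp add: qpoch_nth_0 qpoch_inf_nth_0)
  then have "fps_X ^ ((T + 1)^2) / (qpoch fps_X T * qpoch_inf (fps_X ^ (T + 2)))
      = fps_X ^ ((T + 1)^2) * inverse (qpoch fps_X T) * inverse (qpoch_inf (fps_X ^ (T + 2)))"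
    by (simp add: fps_divide_unit fps_inverse_mult mult.assoc)
  also have "eq_upto n \<dots> (fps_X ^ ((T + 1)^2) * inverse (qpoch fps_X T) * euler_sum (fps_X ^ (T + 2)) (Suc n))"
    by (intro eq_upto_mult eq_upto_refl euler_identity) simp
  also have "\<dots> = (\<Sum>k<Suc n. counting_fps (hook_decomps (Suc T) k))"
    unfolding euler_sum_def sum_distrib_left
  proof (rule sum.cong[OF refl])
    fix k
    have "(T + 1)^2 + (T + 2) * k = Suc T * (Suc T + k) + k"
      by (simp add: power2_eq_square algebra_simps)
    then have exponent: "fps_X ^ ((T + 1)^2) * (fps_X ^ (T + 2)) ^ k
        = (fps_X ^ (Suc T * (Suc T + k)) * fps_X ^ k :: rat fps)"
      by (simp only: power_mult[symmetric] power_add[symmetric])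
    have "fps_X ^ ((T + 1)^2) * inverse (qpoch fps_X T) * ((fps_X ^ (T + 2)) ^ k * inverse (qpoch fps_X k))
        = (fps_X ^ ((T + 1)^2) * (fps_X ^ (T + 2)) ^ k) * (inverse (qpoch fps_X k) * inverse (qpoch fps_X T))"
      by (simp only: mult_ac)
    also have "\<dots> = fps_X ^ (Suc T * (Suc T + k)) * (fps_X ^ k * inverse (qpoch fps_X k) * inverse (qpoch fps_X T))"
      by (simp only: exponent mult_ac)
    also have "\<dots> = counting_fps (hook_decomps (Suc T) k)"
      by (simp add: X_power_mult_inverse_qpoch_qpoch counting_fps_hook_decomps)
    finally show "fps_X ^ ((T + 1)^2) * inverse (qpoch fps_X T) * ((fps_X ^ (T + 2)) ^ k * inverse (qpoch fps_X k))
        = counting_fps (hook_decomps (Suc T) k)" .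
  qed
  finally show ?thesis .
qed

lemma fixed_hook_term_nth:
  "(fps_X ^ ((T + 1)^2) / (qpoch fps_X T * qpoch_inf (fps_X ^ (T + 2)))) $ n
     = of_nat (\<Sum>k<Suc n. card (hook_decomps (Suc T) k n))"
  using eq_upto_fixed_hook_term[of n T] by (simp add: eq_upto_def fps_sum_nth)

lemma hook_decomps_empty: "n \<le> T \<Longrightarrow> hook_decomps (Suc T) k n = {}"
  using hook_decomps_bound[of "Suc T" _ _ k n] by fastforce

lemma fixed_hook_terms_sums:
  "(\<lambda>T. fps_X ^ ((T + 1)^2) / (qpoch fps_X T * qpoch_inf (fps_X ^ (T + 2))))
     sums Abs_fps (\<lambda>n. of_nat (f_fixed n))"
  unfolding sums_def
proof (rule tendsto_fpsI)
  fix n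
  let ?c = "\<lambda>T. (\<Sum>k<Suc n. card (hook_decomps (Suc T) k n))"
  have partial_sum: "(\<Sum>T<N. fps_X ^ ((T + 1)^2) / (qpoch fps_X T * qpoch_inf (fps_X ^ (T + 2)))) $ n
      = of_nat (f_fixed n)" if "n < N" for N
  proof -
    have "(\<Sum>T<N. fps_X ^ ((T + 1)^2) / (qpoch fps_X T * qpoch_inf (fps_X ^ (T + 2)))) $ n
        = of_nat (\<Sum>T<N. ?c T)"
      by (simp only: fps_sum_nth fixed_hook_term_nth of_nat_sum)
    also have "(\<Sum>T<N. ?c T) = (\<Sum>T<Suc n. ?c T)"
      using that by (intro sum.mono_neutral_right) (auto simp: hook_decomps_empty)
    finally show ?thesis by (simp add: f_fixed_eq_sum_card_hook_decomps)
  qed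
  show "eventually (\<lambda>N. (\<Sum>T<N. fps_X ^ ((T + 1)^2) / (qpoch fps_X T * qpoch_inf (fps_X ^ (T + 2)))) $ n
      = Abs_fps (\<lambda>n. of_nat (f_fixed n)) $ n) sequentially"
    using eventually_gt_at_top[of n]
  proof eventually_elim
    case (elim N)
    then show ?case using partial_sum[OF elim] by simp
  qed
qed

lemma fixed_hook_term_alt:
  "fps_X ^ ((T + 1)^2) * (1 - fps_X ^ (T + 1)) / qpoch_inf fps_X
     = fps_X ^ ((T + 1)^2) / (qpoch fps_X T * qpoch_inf (fps_X ^ (T + 2)))"
proof -
  have "fps_X * fps_X ^ (T + 1) = (fps_X ^ (T + 2) :: rat fps)"
    by (simp flip: power_Suc)
  then have "qpoch_inf fps_X = qpoch fps_X T * qpoch_inf (fps_X ^ (T + 2)) * (1 - fps_X ^ (T + 1))"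
    using qpoch_inf_split[of fps_X "T + 1"] by (simp add: qpoch_X_Suc mult_ac)
  moreover have "(1 - fps_X ^ (T + 1) :: rat fps) $ 0 \<noteq> 0"
    by simp
  then have "1 - fps_X ^ (T + 1) \<noteq> (0 :: rat fps)"
    by (metis fps_zero_nth)
  ultimately show ?thesis by simp
qed

theorem mainTheorem2:
  shows "(\<lambda>T. fps_X ^ ((T + 1)^2) / (qpoch fps_X T * qpoch_inf (fps_X ^ (T + 2))))
            sums Abs_fps (\<lambda>n. of_nat (f_fixed n))
       \<and> (\<lambda>T. fps_X ^ ((T + 1)^2) * (1 - fps_X ^ (T + 1)) / qpoch_inf fps_X)
            sums Abs_fps (\<lambda>n. of_nat (f_fixed n))"
  unfolding fixed_hook_term_alt using fixed_hook_terms_sums by simp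

end
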